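(* Let $A$ be a Banach algebra with a bounded left approximate identity, let $X$ be a Banach space, and let $\varphi\colon A\to\mathcal{B}(X)$ be a representation. If for every $x\in X$ the orbit map $A\to X$, $a\mapsto\varphi(a)x$, is weakly compact, then the essential space of $\varphi$ is complemented in $X$.
   Context: A representation is a bounded linear multiplicative map. The essential space of $\varphi$ is the closed linear span of $\{\varphi(a)x: a\in A, x\in X\}$. A closed subspace is complemented if it is the image of some bounded idempotent operator on $X$. *)

theory Defs
  imports "HOL-Analysis.Analysis"
begin

definition weak_topology :: "'x::real_normed_vector topology" where
  "weak_topology = topology_generated_by
     {f -` U | (f :: 'x \<Rightarrow> real) U. bounded_linear f \<and> open U}"

definition weakly_compact_operator :: "('a::real_normed_vector \<Rightarrow> 'x::real_normed_vector) \<Rightarrow> bool" where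
  "weakly_compact_operator T \<longleftrightarrow> bounded_linear T \<and>
     compactin weak_topology (weak_topology closure_of (T ` cball 0 1))"

text \<open>A bounded left approximate identity: a bounded net (e) with e*a \<rightarrow> a for all a.
  A net is represented by its image filter on the algebra.\<close>
definition has_bounded_left_approx_identity :: "'a::real_normed_algebra itself \<Rightarrow> bool" where
  "has_bounded_left_approx_identity _ \<longleftrightarrow>
     (\<exists>(F :: 'a filter) K. F \<noteq> bot \<and> (\<forall>\<^sub>F e in F. norm e \<le> K) \<and>
        (\<forall>a. ((\<lambda>e. e * a) \<longlongrightarrow> a) F))"

definition representation :: "('a::real_normed_algebra \<Rightarrow> ('x::real_normed_vector \<Rightarrow>\<^sub>L 'x)) \<Rightarrow> bool" where
  "representation \<phi> \<longleftrightarrow> bounded_linear \<phi> \<and> (\<forall>a b. \<phi> (a * b) = \<phi> a o\<^sub>L \<phi> b)"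

definition essential_space :: "('a \<Rightarrow> ('x::real_normed_vector \<Rightarrow>\<^sub>L 'x)) \<Rightarrow> 'x set" where
  "essential_space \<phi> = closure (span {\<phi> a x | a x. True})"

definition complemented :: "'x::real_normed_vector set \<Rightarrow> bool" where
  "complemented Y \<longleftrightarrow> (\<exists>P :: 'x \<Rightarrow>\<^sub>L 'x. P o\<^sub>L P = P \<and> range (blinfun_apply P) = Y)"

end

theory Submission
  imports Defs
begin

text \<open>
  Let \<open>(e)\<close> be a bounded left approximate identity and regard the operators \<open>\<phi> e\<close> as points of
  \<open>X\<^sup>X\<close> carrying the product of the weak topologies. Since \<open>\<phi> e x\<close> ranges over a bounded part of
  the orbit of \<open>x\<close>, weak compactness of the orbit maps and Tychonoff's theorem give the net a
  cluster point \<open>P\<close>. Because bounded functionals separate points, \<open>P\<close> inherits linearity and the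
  uniform bound of the net; it maps into the essential space, which is weakly closed by
  Hahn--Banach separation; and it fixes every \<open>\<phi> a x\<close>, since
  \<open>\<phi> e (\<phi> a x) = \<phi> (e a) x \<longrightarrow> \<phi> a x\<close>. So \<open>P\<close> is a bounded projection onto the essential space.
\<close>

section \<open>Hahn--Banach for real normed spaces\<close>

text \<open>Hahn--Banach is obtained from Zorn's lemma on these graphs ordered by inclusion; working with
  graphs rather than partial functions makes the union of a chain an upper bound directly.\<close>

definition dominated_linear_graph :: "real \<Rightarrow> ('x::real_normed_vector \<times> real) set \<Rightarrow> bool" where
  "dominated_linear_graph C G \<longleftrightarrow> (0, 0) \<in> G \<and>
     (\<forall>x a y b. (x, a) \<in> G \<longrightarrow> (y, b) \<in> G \<longrightarrow> (x + y, a + b) \<in> G) \<and>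
     (\<forall>x a r. (x, a) \<in> G \<longrightarrow> (r *\<^sub>R x, r * a) \<in> G) \<and>
     (\<forall>x a b. (x, a) \<in> G \<longrightarrow> (x, b) \<in> G \<longrightarrow> a = b) \<and>
     (\<forall>x a. (x, a) \<in> G \<longrightarrow> a \<le> C * norm x)"

lemma
  assumes "dominated_linear_graph C G"
  shows dominated_linear_graph_zero: "(0, 0) \<in> G"
    and dominated_linear_graph_add: "(x, a) \<in> G \<Longrightarrow> (y, b) \<in> G \<Longrightarrow> (x + y, a + b) \<in> G"
    and dominated_linear_graph_scale: "(x, a) \<in> G \<Longrightarrow> (r *\<^sub>R x, r * a) \<in> G"
    and dominated_linear_graph_functional: "(x, a) \<in> G \<Longrightarrow> (x, b) \<in> G \<Longrightarrow> a = b"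
    and dominated_linear_graph_bound: "(x, a) \<in> G \<Longrightarrow> a \<le> C * norm x"
  using assms unfolding dominated_linear_graph_def by blast+

lemma subspace_Domain_dominated_linear_graph:
  assumes "dominated_linear_graph C G"
  shows "subspace (Domain G)"
  unfolding subspace_def
  using dominated_linear_graph_zero[OF assms] dominated_linear_graph_add[OF assms]
    dominated_linear_graph_scale[OF assms]
  by (metis Domain.simps)

lemma dominated_linear_graph_Union_chain:
  assumes chain: "c \<in> chains {G. dominated_linear_graph C G}" and "c \<noteq> {}"
  shows "dominated_linear_graph C (\<Union>c)"
proof -
  have G: "dominated_linear_graph C G" if "G \<in> c" for G
    using chainsD2[OF chain] that by blast
  have common: "\<exists>G\<in>c. p \<in> G \<and> q \<in> G" if mem: "p \<in> \<Union>c" "q \<in> \<Union>c" for p q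
  proof -
    obtain G1 G2 where "G1 \<in> c" "G2 \<in> c" "p \<in> G1" "q \<in> G2"
      using mem by blast
    then show ?thesis
      using chainsD[OF chain, of G1 G2] by blast
  qed
  show ?thesis
    unfolding dominated_linear_graph_def
  proof (intro conjI allI impI)
    show "(0, 0) \<in> \<Union>c"
      using \<open>c \<noteq> {}\<close> G dominated_linear_graph_zero by blast
    show "(x + y, a + b) \<in> \<Union>c" if "(x, a) \<in> \<Union>c" "(y, b) \<in> \<Union>c" for x a y b
      using common[OF that] G dominated_linear_graph_add by blast
    show "a = b" if "(x, a) \<in> \<Union>c" "(x, b) \<in> \<Union>c" for x a b
      using common[OF that] G dominated_linear_graph_functional by blast
    show "(r *\<^sub>R x, r * a) \<in> \<Union>c" if "(x, a) \<in> \<Union>c" for x a r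
      using that G dominated_linear_graph_scale by blast
    show "a \<le> C * norm x" if "(x, a) \<in> \<Union>c" for x a
      using that G dominated_linear_graph_bound by blast
  qed
qed

lemma dominated_linear_graph_extension_bound:
  assumes G: "dominated_linear_graph C M" and "(y, b) \<in> M"
    and lower: "\<And>u a. (u, a) \<in> M \<Longrightarrow> a - C * norm (u - x0) \<le> c"
    and upper: "\<And>v b. (v, b) \<in> M \<Longrightarrow> c \<le> C * norm (v + x0) - b"
  shows "b + t * c \<le> C * norm (y + t *\<^sub>R x0)"
proof (cases t "0::real" rule: linorder_cases)
  case less
  define s where "s = - t"
  have "s > 0" using less by (simp add: s_def)
  have "s *\<^sub>R (inverse s *\<^sub>R y - x0) = y + t *\<^sub>R x0"
    using \<open>s > 0\<close> by (simp add: s_def algebra_simps)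
  then have norm_eq: "s * norm (inverse s *\<^sub>R y - x0) = norm (y + t *\<^sub>R x0)"
    using \<open>s > 0\<close> by (metis abs_of_pos norm_scaleR)
  have "inverse s * b - C * norm (inverse s *\<^sub>R y - x0) \<le> c"
    using lower dominated_linear_graph_scale[OF G \<open>(y, b) \<in> M\<close>] .
  then have "s * (inverse s * b - C * norm (inverse s *\<^sub>R y - x0)) \<le> s * c"
    using \<open>s > 0\<close> by (intro mult_left_mono) auto
  also have "s * (inverse s * b - C * norm (inverse s *\<^sub>R y - x0)) = b - C * norm (y + t *\<^sub>R x0)"
    using \<open>s > 0\<close> norm_eq[symmetric] by (simp add: right_diff_distrib)
  finally show ?thesis by (simp add: s_def)
next
  case equal
  then show ?thesis using dominated_linear_graph_bound[OF G \<open>(y, b) \<in> M\<close>] by simp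
next
  case greater
  have "t *\<^sub>R (inverse t *\<^sub>R y + x0) = y + t *\<^sub>R x0"
    using greater by (simp add: algebra_simps)
  then have norm_eq: "t * norm (inverse t *\<^sub>R y + x0) = norm (y + t *\<^sub>R x0)"
    using greater by (metis abs_of_pos norm_scaleR)
  have "c \<le> C * norm (inverse t *\<^sub>R y + x0) - inverse t * b"
    using upper dominated_linear_graph_scale[OF G \<open>(y, b) \<in> M\<close>] .
  then have "t * c \<le> t * (C * norm (inverse t *\<^sub>R y + x0) - inverse t * b)"
    using greater by (intro mult_left_mono) auto
  also have "\<dots> = C * norm (y + t *\<^sub>R x0) - b"
    using greater norm_eq[symmetric] by (simp add: right_diff_distrib)
  finally show ?thesis by simp
qed

lemma dominated_linear_graph_extend_by:
  assumes G: "dominated_linear_graph C M" and x0: "x0 \<notin> Domain M"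
    and lower: "\<And>u a. (u, a) \<in> M \<Longrightarrow> a - C * norm (u - x0) \<le> c"
    and upper: "\<And>v b. (v, b) \<in> M \<Longrightarrow> c \<le> C * norm (v + x0) - b"
  shows "dominated_linear_graph C {(y + t *\<^sub>R x0, b + t * c) | y b t. (y, b) \<in> M}"
    (is "dominated_linear_graph C ?G")
proof -
  have coordinates_unique: "t = t' \<and> y = y'"
    if "y \<in> Domain M" "y' \<in> Domain M" "y + t *\<^sub>R x0 = y' + t' *\<^sub>R x0" for y y' t t'
  proof (cases "t = t'")
    case False
    have "(t - t') *\<^sub>R x0 = y' - y"
      using that(3) by (simp add: algebra_simps)
    moreover have "x0 = inverse (t - t') *\<^sub>R ((t - t') *\<^sub>R x0)"
      using False by simp
    ultimately have "x0 = inverse (t - t') *\<^sub>R (y' - y)"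
      by simp
    also have "\<dots> \<in> Domain M"
      using subspace_Domain_dominated_linear_graph[OF G] that(1,2)
      by (simp add: subspace_scale subspace_diff)
    finally show ?thesis using x0 by simp
  qed (use that in simp)
  show ?thesis
    unfolding dominated_linear_graph_def
  proof (intro conjI allI impI)
    show "(0, 0) \<in> ?G"
      using dominated_linear_graph_zero[OF G] by force
    show "(x + z, a + d) \<in> ?G" if mem: "(x, a) \<in> ?G" "(z, d) \<in> ?G" for x a z d
    proof -
      obtain y b t y' b' t' where "(y, b) \<in> M" "(y', b') \<in> M"
        "x = y + t *\<^sub>R x0" "a = b + t * c" "z = y' + t' *\<^sub>R x0" "d = b' + t' * c"
        using mem by blast
      then show ?thesis
        using dominated_linear_graph_add[OF G]
        by (intro CollectI exI[of _ "y + y'"] exI[of _ "b + b'"] exI[of _ "t + t'"])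
          (auto simp: algebra_simps)
    qed
    show "(r *\<^sub>R x, r * a) \<in> ?G" if mem: "(x, a) \<in> ?G" for x a r
    proof -
      obtain y b t where "(y, b) \<in> M" "x = y + t *\<^sub>R x0" "a = b + t * c"
        using mem by blast
      then show ?thesis
        using dominated_linear_graph_scale[OF G]
        by (intro CollectI exI[of _ "r *\<^sub>R y"] exI[of _ "r * b"] exI[of _ "r * t"])
          (auto simp: algebra_simps)
    qed
    show "a = d" if mem: "(x, a) \<in> ?G" "(x, d) \<in> ?G" for x a d
    proof -
      obtain y b t y' b' t' where "(y, b) \<in> M" "(y', b') \<in> M"
        "x = y + t *\<^sub>R x0" "a = b + t * c" "x = y' + t' *\<^sub>R x0" "d = b' + t' * c"
        using mem by blast
      then show ?thesis
        using coordinates_unique dominated_linear_graph_functional[OF G] by (metis Domain.DomainI)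
    qed
    show "a \<le> C * norm x" if "(x, a) \<in> ?G" for x a
      using that dominated_linear_graph_extension_bound[OF G _ lower upper] by blast
  qed
qed

lemma dominated_linear_graph_extension_value:
  assumes G: "dominated_linear_graph C M" and "C \<ge> 0"
  obtains c where "\<And>u a. (u, a) \<in> M \<Longrightarrow> a - C * norm (u - x0) \<le> c"
    and "\<And>v b. (v, b) \<in> M \<Longrightarrow> c \<le> C * norm (v + x0) - b"
proof -
  define h where "h p = snd p - C * norm (fst p - x0)" for p
  have below: "h (u, a) \<le> C * norm (v + x0) - b" if "(u, a) \<in> M" "(v, b) \<in> M" for u a v b
  proof -
    have "a + b \<le> C * norm (u + v)"
      using dominated_linear_graph_bound[OF G dominated_linear_graph_add[OF G that]] .
    also have "\<dots> \<le> C * (norm (u - x0) + norm (v + x0))"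
      using norm_triangle_ineq[of "u - x0" "v + x0"] \<open>C \<ge> 0\<close> by (simp add: mult_left_mono)
    finally show ?thesis by (simp add: h_def algebra_simps)
  qed
  have "bdd_above (h ` M)"
    using below[OF _ dominated_linear_graph_zero[OF G]] by (auto intro!: bdd_aboveI)
  moreover have "M \<noteq> {}"
    using dominated_linear_graph_zero[OF G] by blast
  ultimately show ?thesis
    using below by (intro that[of "Sup (h ` M)"]) (auto simp: h_def intro!: cSUP_upper2 cSUP_least)
qed

lemma dominated_linear_graph_extend:
  assumes G: "dominated_linear_graph C M" and "C \<ge> 0" and x0: "x0 \<notin> Domain M"
  obtains G' where "dominated_linear_graph C G'" and "M \<subset> G'"
proof -
  obtain c where lower: "\<And>u a. (u, a) \<in> M \<Longrightarrow> a - C * norm (u - x0) \<le> c"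
    and upper: "\<And>v b. (v, b) \<in> M \<Longrightarrow> c \<le> C * norm (v + x0) - b"
    using dominated_linear_graph_extension_value[OF G \<open>C \<ge> 0\<close>] by blast
  let ?G' = "{(y + t *\<^sub>R x0, b + t * c) | y b t. (y, b) \<in> M}"
  have "M \<subseteq> ?G'"
    by (force intro: exI[of _ "0::real"])
  moreover have "(x0, c) \<in> ?G' - M"
    using dominated_linear_graph_zero[OF G] x0 by (force intro: exI[of _ "1::real"])
  ultimately show ?thesis
    using that dominated_linear_graph_extend_by[OF G x0 lower upper] by blast
qed

lemma dominated_linear_graph_total_functional:
  assumes M: "dominated_linear_graph C M" and total: "Domain M = UNIV"
  obtains f :: "'x::real_normed_vector \<Rightarrow> real"
  where "bounded_linear f" and "\<And>y. \<bar>f y\<bar> \<le> C * norm y" and "\<And>y b. (y, b) \<in> M \<Longrightarrow> f y = b"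
proof -
  define f where "f y = (SOME b. (y, b) \<in> M)" for y
  have graph: "(y, f y) \<in> M" for y
    unfolding f_def using total by (auto intro: someI)
  have f_eq: "f y = b" if "(y, b) \<in> M" for y b
    using dominated_linear_graph_functional[OF M graph that] .
  have bound: "\<bar>f y\<bar> \<le> C * norm y" for y
    using dominated_linear_graph_bound[OF M graph[of y]]
      dominated_linear_graph_bound[OF M dominated_linear_graph_scale[OF M graph[of y], of "-1"]]
    by simp
  have "bounded_linear f"
  proof (rule bounded_linear_intro[where K = C])
    show "f (x + y) = f x + f y" for x y
      using f_eq dominated_linear_graph_add[OF M graph graph] .
    show "f (r *\<^sub>R x) = r *\<^sub>R f x" for r x
      using f_eq dominated_linear_graph_scale[OF M graph] by simp
    show "norm (f x) \<le> norm x * C" for x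
      using bound[of x] by (simp add: mult.commute)
  qed
  then show ?thesis
    using bound f_eq by (intro that) auto
qed

lemma dominated_linear_graph_extends_to_functional:
  assumes G0: "dominated_linear_graph C G0" and "C \<ge> 0"
  obtains f :: "'x::real_normed_vector \<Rightarrow> real"
  where "bounded_linear f" and "\<And>y. \<bar>f y\<bar> \<le> C * norm y" and "\<And>y b. (y, b) \<in> G0 \<Longrightarrow> f y = b"
proof -
  define A where "A = {G. dominated_linear_graph C G \<and> G0 \<subseteq> G}"
  have chains_bounded: "\<forall>c\<in>chains A. \<exists>U\<in>A. \<forall>X\<in>c. X \<subseteq> U"
  proof
    fix c
    assume c: "c \<in> chains A"
    show "\<exists>U\<in>A. \<forall>X\<in>c. X \<subseteq> U"
    proof (cases "c = {}")
      case True
      then show ?thesis using G0 unfolding A_def by blast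
    next
      case False
      have "c \<in> chains {G. dominated_linear_graph C G}"
        using c unfolding A_def chains_def by blast
      then have "\<Union>c \<in> A"
        using dominated_linear_graph_Union_chain False chainsD2[OF c] unfolding A_def by blast
      then show ?thesis by blast
    qed
  qed
  obtain M where "M \<in> A" and maximal: "\<And>X. X \<in> A \<Longrightarrow> M \<subseteq> X \<Longrightarrow> X = M"
    using Zorn_Lemma2[OF chains_bounded] by blast
  then have M: "dominated_linear_graph C M" and "G0 \<subseteq> M"
    unfolding A_def by auto
  have "Domain M = UNIV"
  proof (rule ccontr)
    assume "Domain M \<noteq> UNIV"
    then obtain y where "y \<notin> Domain M"
      by blast
    then obtain G where "dominated_linear_graph C G" "M \<subset> G"
      using dominated_linear_graph_extend[OF M \<open>C \<ge> 0\<close>] by blast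
    then show False
      using maximal[of G] \<open>G0 \<subseteq> M\<close> unfolding A_def by blast
  qed
  then obtain f :: "'x \<Rightarrow> real" where "bounded_linear f" and "\<And>y. \<bar>f y\<bar> \<le> C * norm y"
    and "\<And>y b. (y, b) \<in> M \<Longrightarrow> f y = b"
    using dominated_linear_graph_total_functional[OF M] by blast
  then show ?thesis
    using \<open>G0 \<subseteq> M\<close> by (intro that) auto
qed

lemma norming_functional_exists:
  fixes x :: "'x::real_normed_vector"
  obtains f :: "'x \<Rightarrow> real" where "bounded_linear f" and "\<And>y. \<bar>f y\<bar> \<le> norm y" and "f x = norm x"
proof (cases "x = 0")
  case True
  then show ?thesis
    using that[of "\<lambda>_. 0"] by (simp add: bounded_linear_zero)
next
  case False
  have zero_graph: "dominated_linear_graph 1 {(0 :: 'x, 0)}"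
    unfolding dominated_linear_graph_def by simp
  let ?G = "{(y + t *\<^sub>R x, b + t * norm x) | y b t. (y, b) \<in> {(0 :: 'x, 0)}}"
  have G: "dominated_linear_graph 1 ?G"
    using False by (intro dominated_linear_graph_extend_by[OF zero_graph]) auto
  obtain f :: "'x \<Rightarrow> real" where "bounded_linear f" and bound: "\<And>y. \<bar>f y\<bar> \<le> 1 * norm y"
    and extends: "\<And>y b. (y, b) \<in> ?G \<Longrightarrow> f y = b"
    using dominated_linear_graph_extends_to_functional[OF G zero_le_one] by blast
  moreover have "(x, norm x) \<in> ?G"
    by (force intro: exI[of _ "1::real"])
  ultimately show ?thesis
    using bound by (intro that[of f]) (auto intro: extends)
qed

lemma functional_vanishing_on_closed_subspace_exists:
  fixes M :: "'x::real_normed_vector set"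
  assumes "subspace M" and "closed M" and "x \<notin> M"
  obtains f :: "'x \<Rightarrow> real" where "bounded_linear f" and "\<And>m. m \<in> M \<Longrightarrow> f m = 0" and "f x = 1"
proof -
  define d where "d = infdist x M"
  have "M \<noteq> {}"
    using subspace_0[OF \<open>subspace M\<close>] by blast
  then have "d > 0"
    unfolding d_def using \<open>closed M\<close> \<open>x \<notin> M\<close> by (intro infdist_pos_not_in_closed)
  have dist_ge: "d \<le> norm (m + x)" if "m \<in> M" for m
  proof -
    have "d \<le> dist x (- m)"
      unfolding d_def using \<open>subspace M\<close> that by (intro infdist_le) (simp add: subspace_neg)
    then show ?thesis by (simp add: dist_norm add.commute)
  qed
  let ?G = "{(m, 0) | m. m \<in> M}"
  have G: "dominated_linear_graph (1 / d) ?G"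
    using \<open>subspace M\<close> \<open>d > 0\<close> unfolding dominated_linear_graph_def subspace_def by auto
  let ?G' = "{(y + t *\<^sub>R x, b + t * 1) | y b t. (y, b) \<in> ?G}"
  have G': "dominated_linear_graph (1 / d) ?G'"
  proof (rule dominated_linear_graph_extend_by[OF G])
    show "x \<notin> Domain ?G" using \<open>x \<notin> M\<close> by auto
    show "a - 1 / d * norm (u - x) \<le> 1" if "(u, a) \<in> ?G" for u a
      using that \<open>d > 0\<close> by (auto simp: field_simps intro: order_trans[OF _ norm_ge_zero])
    show "1 \<le> 1 / d * norm (v + x) - b" if "(v, b) \<in> ?G" for v b
      using that dist_ge \<open>d > 0\<close> by (auto simp: field_simps)
  qed
  have "1 / d \<ge> 0"
    using \<open>d > 0\<close> by simp
  obtain f :: "'x \<Rightarrow> real" where "bounded_linear f" and "\<And>y. \<bar>f y\<bar> \<le> 1 / d * norm y"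
    and extends: "\<And>y b. (y, b) \<in> ?G' \<Longrightarrow> f y = b"
    using dominated_linear_graph_extends_to_functional[OF G' \<open>1 / d \<ge> 0\<close>] by blast
  have "f m = 0" if "m \<in> M" for m
  proof (rule extends)
    show "(m, 0) \<in> ?G'"
      using that by (intro CollectI exI[of _ m] exI[of _ "0::real"]) auto
  qed
  moreover have "f x = 1"
  proof (rule extends)
    show "(x, 1) \<in> ?G'"
      using subspace_0[OF \<open>subspace M\<close>] by (intro CollectI exI[of _ 0] exI[of _ "0::real"] exI[of _ "1::real"]) auto
  qed
  ultimately show ?thesis
    using that \<open>bounded_linear f\<close> by blast
qed

lemma bounded_linear_functionals_separate_points:
  fixes u v :: "'x::real_normed_vector"
  assumes "\<And>f. bounded_linear f \<Longrightarrow> f u = (f v :: real)"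
  shows "u = v"
proof -
  obtain f :: "'x \<Rightarrow> real" where f: "bounded_linear f" and "f (u - v) = norm (u - v)"
    using norming_functional_exists by blast
  moreover have "f (u - v) = f u - f v"
    using f by (simp add: linear_simps)
  ultimately show ?thesis
    using assms[OF f] by simp
qed

section \<open>Weak topologies and cluster points of nets\<close>

lemma topspace_weak_topology [simp]:
  "topspace (weak_topology :: 'x::real_normed_vector topology) = UNIV"
proof -
  have "(\<lambda>_::'x. 0::real) -` UNIV \<in> {f -` U | (f :: 'x \<Rightarrow> real) U. bounded_linear f \<and> open U}"
    by (intro CollectI exI[of _ "\<lambda>_::'x. 0::real"] exI[of _ "UNIV::real set"])
      (auto simp: bounded_linear_zero)
  then show ?thesis
    unfolding weak_topology_def topology_generated_by_topspace by auto
qed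

lemma continuous_map_weak_topology_functional:
  assumes "bounded_linear (f :: 'x::real_normed_vector \<Rightarrow> real)"
  shows "continuous_map weak_topology euclideanreal f"
  unfolding continuous_map_def
proof (intro conjI allI impI)
  show "f \<in> topspace weak_topology \<rightarrow> topspace euclideanreal"
    by simp
  fix U :: "real set"
  assume "openin euclideanreal U"
  then have "openin weak_topology (f -` U)"
    unfolding weak_topology_def using assms by (intro topology_generated_by_Basis) auto
  then show "openin weak_topology {x \<in> topspace weak_topology. f x \<in> U}"
    by (simp add: vimage_def)
qed

definition pointwise_weak_topology :: "('x \<Rightarrow> 'y::real_normed_vector) topology" where
  "pointwise_weak_topology = product_topology (\<lambda>_. weak_topology) UNIV"

lemma topspace_pointwise_weak_topology [simp]: "topspace pointwise_weak_topology = UNIV"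
  by (simp add: pointwise_weak_topology_def PiE_UNIV_domain)

lemma continuous_map_pointwise_weak_topology_eval:
  fixes x :: 'x
  assumes "bounded_linear (f :: 'y::real_normed_vector \<Rightarrow> real)"
  shows "continuous_map pointwise_weak_topology euclideanreal (\<lambda>q. f (q x))"
proof -
  have "continuous_map pointwise_weak_topology weak_topology (\<lambda>q :: 'x \<Rightarrow> 'y. q x)"
    unfolding pointwise_weak_topology_def by (rule continuous_map_product_projection) simp
  then show ?thesis
    using continuous_map_compose[OF _ continuous_map_weak_topology_functional[OF assms]]
    by (simp add: o_def)
qed

definition net_cluster_point :: "'b topology \<Rightarrow> 'a filter \<Rightarrow> ('a \<Rightarrow> 'b) \<Rightarrow> 'b \<Rightarrow> bool" where
  "net_cluster_point T F g p \<longleftrightarrow> (\<forall>E. eventually (\<lambda>e. e \<in> E) F \<longrightarrow> p \<in> T closure_of (g ` E))"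

lemma compactin_net_cluster_point:
  assumes "compactin T Q" and "F \<noteq> bot" and "eventually (\<lambda>e. g e \<in> Q) F"
  obtains p where "p \<in> Q" and "net_cluster_point T F g p"
proof -
  define U where "U = {T closure_of (g ` E) | E. eventually (\<lambda>e. e \<in> E) F}"
  have finite_intersection: "Q \<inter> \<Inter>\<F> \<noteq> {}" if "finite \<F>" "\<F> \<subseteq> U" for \<F>
  proof -
    define E where "E C = (SOME E. eventually (\<lambda>e. e \<in> E) F \<and> C = T closure_of (g ` E))" for C
    have E: "eventually (\<lambda>e. e \<in> E C) F \<and> C = T closure_of (g ` E C)" if "C \<in> \<F>" for C
    proof -
      have "\<exists>E. eventually (\<lambda>e. e \<in> E) F \<and> C = T closure_of (g ` E)"
        using that \<open>\<F> \<subseteq> U\<close> unfolding U_def by blast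
      then show ?thesis
        unfolding E_def by (rule someI_ex)
    qed
    have "eventually (\<lambda>e. \<forall>C\<in>\<F>. e \<in> E C) F"
      using \<open>finite \<F>\<close> E by (intro eventually_ball_finite) auto
    with assms(3) have "eventually (\<lambda>e. g e \<in> Q \<and> (\<forall>C\<in>\<F>. e \<in> E C)) F"
      by (rule eventually_conj)
    then obtain e where "g e \<in> Q" and e: "\<forall>C\<in>\<F>. e \<in> E C"
      using eventually_happens'[OF \<open>F \<noteq> bot\<close>] by auto
    have "g e \<in> C" if "C \<in> \<F>" for C
    proof -
      have "g e \<in> topspace T \<inter> g ` E C"
        using \<open>g e \<in> Q\<close> e that compactin_subset_topspace[OF assms(1)] by auto
      also have "\<dots> \<subseteq> T closure_of (g ` E C)"
        by (rule closure_of_subset_Int)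
      also have "\<dots> = C"
        using E[OF that] by simp
      finally show ?thesis .
    qed
    then show ?thesis
      using \<open>g e \<in> Q\<close> by blast
  qed
  have "Q \<inter> \<Inter>U \<noteq> {}"
  proof (rule compactin_fip[THEN iffD1, OF assms(1), THEN conjunct2, rule_format], intro conjI ballI allI impI)
    show "closedin T C" if "C \<in> U" for C
      using that unfolding U_def by auto
    show "Q \<inter> \<Inter>\<F> \<noteq> {}" if "finite \<F> \<and> \<F> \<subseteq> U" for \<F>
      using that finite_intersection by blast
  qed
  then obtain p where "p \<in> Q" and "\<And>C. C \<in> U \<Longrightarrow> p \<in> C"
    by blast
  moreover have "net_cluster_point T F g p"
    unfolding net_cluster_point_def using \<open>\<And>C. C \<in> U \<Longrightarrow> p \<in> C\<close> unfolding U_def by blast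
  ultimately show ?thesis
    using that by blast
qed

lemma net_cluster_point_continuous_map_closedin:
  assumes p: "net_cluster_point T F g p" and h: "continuous_map T Y h" and "closedin Y S"
    and "eventually (\<lambda>e. h (g e) \<in> S) F"
  shows "h p \<in> S"
proof -
  have "p \<in> T closure_of (g ` {e. h (g e) \<in> S})"
    using p assms(4) unfolding net_cluster_point_def by simp
  also have "\<dots> = T closure_of (topspace T \<inter> g ` {e. h (g e) \<in> S})"
    by (rule closure_of_restrict)
  also have "\<dots> \<subseteq> {q \<in> topspace T. h q \<in> S}"
    using closedin_continuous_map_preimage[OF h \<open>closedin Y S\<close>] by (intro closure_of_minimal) auto
  finally show ?thesis by simp
qed

lemma net_cluster_point_tendsto:
  fixes h :: "'b \<Rightarrow> 'c::metric_space"
  assumes p: "net_cluster_point T F g p" and h: "continuous_map T euclidean h"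
    and lim: "((\<lambda>e. h (g e)) \<longlongrightarrow> L) F"
  shows "h p = L"
proof -
  have "dist (h p) L \<le> 0 + \<epsilon>" if "\<epsilon> > 0" for \<epsilon>
  proof -
    have "eventually (\<lambda>e. dist (h (g e)) L < \<epsilon>) F"
      using lim that by (rule tendstoD)
    then have "eventually (\<lambda>e. h (g e) \<in> cball L \<epsilon>) F"
      by (rule eventually_mono) (simp add: dist_commute)
    then have "h p \<in> cball L \<epsilon>"
      by (intro net_cluster_point_continuous_map_closedin[OF p h]) auto
    then show ?thesis by (simp add: dist_commute)
  qed
  then show ?thesis
    using field_le_epsilon[of "dist (h p) L" 0] by simp
qed

section \<open>Cluster points of nets of operators\<close>

lemma linear_net_cluster_point:
  fixes \<Phi> :: "'a \<Rightarrow> 'x::real_normed_vector \<Rightarrow> 'y::real_normed_vector"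
  assumes p: "net_cluster_point pointwise_weak_topology F \<Phi> p" and "\<And>e. linear (\<Phi> e)"
  shows "linear p"
proof
  show "p (x + y) = p x + p y" for x y
  proof (rule bounded_linear_functionals_separate_points)
    fix f :: "'y \<Rightarrow> real"
    assume f: "bounded_linear f"
    let ?h = "\<lambda>q. f (q (x + y)) - f (q x) - f (q y)"
    have "continuous_map pointwise_weak_topology euclidean ?h"
      using f by (intro continuous_map_diff continuous_map_pointwise_weak_topology_eval)
    moreover have "((\<lambda>e. ?h (\<Phi> e)) \<longlongrightarrow> 0) F"
      using f \<open>\<And>e. linear (\<Phi> e)\<close> by (simp add: linear_add bounded_linear.linear)
    ultimately have "?h p = 0"
      by (rule net_cluster_point_tendsto[OF p])
    then show "f (p (x + y)) = f (p x + p y)"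
      using f by (simp add: linear_add bounded_linear.linear)
  qed
  show "p (c *\<^sub>R x) = c *\<^sub>R p x" for c x
  proof (rule bounded_linear_functionals_separate_points)
    fix f :: "'y \<Rightarrow> real"
    assume f: "bounded_linear f"
    let ?h = "\<lambda>q. f (q (c *\<^sub>R x)) - c * f (q x)"
    have "continuous_map pointwise_weak_topology euclidean ?h"
      using f by (intro continuous_map_diff continuous_map_real_mult continuous_map_const[THEN iffD2]
          continuous_map_pointwise_weak_topology_eval) simp_all
    moreover have "((\<lambda>e. ?h (\<Phi> e)) \<longlongrightarrow> 0) F"
      using f \<open>\<And>e. linear (\<Phi> e)\<close> by (simp add: linear_scale bounded_linear.linear)
    ultimately have "?h p = 0"
      by (rule net_cluster_point_tendsto[OF p])
    then show "f (p (c *\<^sub>R x)) = f (c *\<^sub>R p x)"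
      using f by (simp add: linear_scale bounded_linear.linear)
  qed
qed

lemma norm_net_cluster_point_le:
  fixes \<Phi> :: "'a \<Rightarrow> 'x \<Rightarrow> 'y::real_normed_vector"
  assumes p: "net_cluster_point pointwise_weak_topology F \<Phi> p"
    and bound: "eventually (\<lambda>e. norm (\<Phi> e x) \<le> M) F"
  shows "norm (p x) \<le> M"
proof -
  obtain f :: "'y \<Rightarrow> real" where f: "bounded_linear f" and f_le: "\<And>y. \<bar>f y\<bar> \<le> norm y"
    and "f (p x) = norm (p x)"
    using norming_functional_exists by blast
  have "eventually (\<lambda>e. f (\<Phi> e x) \<in> {..M}) F"
    using bound by (rule eventually_mono) (use f_le abs_le_D1 order_trans in \<open>fastforce\<close>)
  then have "f (p x) \<in> {..M}"
    by (intro net_cluster_point_continuous_map_closedin[OF p continuous_map_pointwise_weak_topology_eval[OF f]]) auto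
  then show ?thesis
    using \<open>f (p x) = norm (p x)\<close> by simp
qed

lemma net_cluster_point_in_closed_subspace:
  fixes \<Phi> :: "'a \<Rightarrow> 'x \<Rightarrow> 'y::real_normed_vector"
  assumes p: "net_cluster_point pointwise_weak_topology F \<Phi> p"
    and "subspace Y" and "closed Y" and "eventually (\<lambda>e. \<Phi> e x \<in> Y) F"
  shows "p x \<in> Y"
proof (rule ccontr)
  assume "p x \<notin> Y"
  then obtain f :: "'y \<Rightarrow> real" where f: "bounded_linear f" and "\<And>y. y \<in> Y \<Longrightarrow> f y = 0"
    and "f (p x) = 1"
    using functional_vanishing_on_closed_subspace_exists[OF \<open>subspace Y\<close> \<open>closed Y\<close>] by blast
  have "eventually (\<lambda>e. f (\<Phi> e x) \<in> {0}) F"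
    using assms(4) by (rule eventually_mono) (simp add: \<open>\<And>y. y \<in> Y \<Longrightarrow> f y = 0\<close>)
  then have "f (p x) \<in> {0}"
    by (intro net_cluster_point_continuous_map_closedin[OF p continuous_map_pointwise_weak_topology_eval[OF f]]) auto
  then show False
    using \<open>f (p x) = 1\<close> by simp
qed

lemma net_cluster_point_fixes:
  fixes \<Phi> :: "'a \<Rightarrow> 'x \<Rightarrow> 'x::real_normed_vector"
  assumes p: "net_cluster_point pointwise_weak_topology F \<Phi> p"
    and lim: "((\<lambda>e. \<Phi> e y) \<longlongrightarrow> y) F"
  shows "p y = y"
proof (rule bounded_linear_functionals_separate_points)
  fix f :: "'x \<Rightarrow> real"
  assume f: "bounded_linear f"
  have "((\<lambda>e. f (\<Phi> e y)) \<longlongrightarrow> f y) F"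
    using bounded_linear.tendsto[OF f lim] .
  then show "f (p y) = f y"
    by (rule net_cluster_point_tendsto[OF p continuous_map_pointwise_weak_topology_eval[OF f]])
qed

text \<open>With \<open>r = max K 1\<close> one has \<open>\<Phi> e x = \<Phi> (e /\<^sub>R r) (r *\<^sub>R x)\<close> and \<open>norm (e /\<^sub>R r) \<le> 1\<close>,
  so eventually the net lies in the product of the weak closures of the unit-ball orbits of the
  points \<open>r *\<^sub>R x\<close>.\<close>

lemma weakly_compact_orbits_net_cluster_point:
  fixes \<Phi> :: "'a::real_normed_vector \<Rightarrow> 'x::real_normed_vector \<Rightarrow> 'y::real_normed_vector"
  assumes wc: "\<And>x. weakly_compact_operator (\<lambda>a. \<Phi> a x)" and lin: "\<And>a. linear (\<Phi> a)"
    and "F \<noteq> bot" and bounded: "eventually (\<lambda>e. norm e \<le> K) F"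
  obtains p where "net_cluster_point pointwise_weak_topology F \<Phi> p"
proof -
  have orbit: "bounded_linear (\<lambda>a. \<Phi> a x)" for x
    using wc unfolding weakly_compact_operator_def by blast
  define r where "r = max K 1"
  have "r > 0" "K \<le> r"
    unfolding r_def by auto
  define C where "C x = weak_topology closure_of ((\<lambda>a. \<Phi> a (r *\<^sub>R x)) ` cball 0 1)" for x
  have compact: "compactin pointwise_weak_topology (PiE UNIV C)"
    using wc unfolding pointwise_weak_topology_def compactin_PiE C_def weakly_compact_operator_def
    by blast
  have in_box: "\<Phi> e \<in> PiE UNIV C" if "norm e \<le> K" for e
    unfolding PiE_UNIV_domain
  proof
    fix x
    have "\<Phi> (inverse r *\<^sub>R e) (r *\<^sub>R x) = inverse r *\<^sub>R \<Phi> e (r *\<^sub>R x)"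
      using linear_scale[OF bounded_linear.linear[OF orbit]] .
    also have "\<dots> = \<Phi> e x"
      using \<open>r > 0\<close> lin[of e] by (simp add: linear_scale)
    finally have "\<Phi> e x \<in> (\<lambda>a. \<Phi> a (r *\<^sub>R x)) ` cball 0 1"
      using that \<open>r > 0\<close> \<open>K \<le> r\<close> by (intro rev_image_eqI[of "inverse r *\<^sub>R e"]) (auto simp: field_simps)
    then show "\<Phi> e x \<in> C x"
      unfolding C_def by (rule subsetD[OF closure_of_subset_Int[of weak_topology, simplified]])
  qed
  have "eventually (\<lambda>e. \<Phi> e \<in> PiE UNIV C) F"
    using bounded by (rule eventually_mono) (rule in_box)
  then show ?thesis
    using compactin_net_cluster_point[OF compact \<open>F \<noteq> bot\<close>] that by blast
qed

section \<open>The projection onto the essential space\<close>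

lemma subspace_closure:
  fixes S :: "'x::real_normed_vector set"
  assumes "subspace S"
  shows "subspace (closure S)"
  unfolding subspace_def
proof (intro conjI ballI allI)
  show "0 \<in> closure S"
    using assms subspace_0 closure_subset by blast
  show "x + y \<in> closure S" if mem: "x \<in> closure S" "y \<in> closure S" for x y
  proof -
    obtain xs ys where "\<forall>n. xs n \<in> S" "xs \<longlonglongrightarrow> x" "\<forall>n. ys n \<in> S" "ys \<longlonglongrightarrow> y"
      using mem unfolding closure_sequential by blast
    then show ?thesis
      unfolding closure_sequential using assms
      by (intro exI[of _ "\<lambda>n. xs n + ys n"]) (auto intro: tendsto_add subspace_add)
  qed
  show "c *\<^sub>R x \<in> closure S" if mem: "x \<in> closure S" for c x
  proof -
    obtain xs where "\<forall>n. xs n \<in> S" "xs \<longlonglongrightarrow> x"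
      using mem unfolding closure_sequential by blast
    then show ?thesis
      unfolding closure_sequential using assms
      by (intro exI[of _ "\<lambda>n. c *\<^sub>R xs n"]) (auto intro: tendsto_scaleR subspace_scale)
  qed
qed

lemma bounded_linear_fixes_closure_span:
  assumes "bounded_linear p" and "\<And>y. y \<in> S \<Longrightarrow> p y = y" and "y \<in> closure (span S)"
  shows "p y = y"
proof -
  have "subspace {y. p y = y}"
    using \<open>bounded_linear p\<close> unfolding subspace_def
    by (simp add: linear_add linear_scale linear_0 bounded_linear.linear)
  then have "span S \<subseteq> {y. p y = y}"
    using assms(2) by (intro span_minimal) auto
  moreover have "closed {y. p y = y}"
    using \<open>bounded_linear p\<close> by (intro closed_Collect_eq linear_continuous_on continuous_on_id)
  ultimately have "closure (span S) \<subseteq> {y. p y = y}"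
    by (rule closure_minimal)
  then show ?thesis
    using assms(3) by blast
qed

lemma complementedI:
  assumes "bounded_linear p" and "\<And>x. p x \<in> Y" and "\<And>y. y \<in> Y \<Longrightarrow> p y = y"
  shows "complemented Y"
proof -
  have apply_P: "blinfun_apply (Blinfun p) = p"
    using \<open>bounded_linear p\<close> by (rule bounded_linear_Blinfun_apply)
  have "Blinfun p o\<^sub>L Blinfun p = Blinfun p"
    by (rule blinfun_eqI) (simp add: apply_P assms(2,3))
  moreover have "range (blinfun_apply (Blinfun p)) = Y"
    using assms(2,3) unfolding apply_P by (metis image_subset_iff range_eqI subsetI subset_antisym)
  ultimately show ?thesis
    unfolding complemented_def by blast
qed

theorem theoremB:
  fixes \<phi> :: "'a::{real_normed_algebra, banach} \<Rightarrow> ('x::banach \<Rightarrow>\<^sub>L 'x)"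
  assumes "has_bounded_left_approx_identity TYPE('a)"
    and "representation \<phi>"
    and "\<forall>x. weakly_compact_operator (\<lambda>a. \<phi> a x)"
  shows "complemented (essential_space \<phi>)"
proof -
  obtain F :: "'a filter" and K where "F \<noteq> bot" and bounded: "\<forall>\<^sub>F e in F. norm e \<le> K"
    and left_unit: "\<And>a. ((\<lambda>e. e * a) \<longlongrightarrow> a) F"
    using assms(1) unfolding has_bounded_left_approx_identity_def by blast
  have "bounded_linear \<phi>" and mult: "\<And>a b. \<phi> (a * b) = \<phi> a o\<^sub>L \<phi> b"
    using assms(2) unfolding representation_def by auto
  obtain B where "B \<ge> 0" and B: "\<And>a. norm (\<phi> a) \<le> norm a * B"
    using bounded_linear.nonneg_bounded[OF \<open>bounded_linear \<phi>\<close>] by blast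
  have orbit: "bounded_linear (\<lambda>a. \<phi> a x)" for x
    using assms(3) unfolding weakly_compact_operator_def by blast
  have linear_\<phi>: "linear (blinfun_apply (\<phi> e))" for e
    by (rule bounded_linear.linear[OF blinfun.bounded_linear_right])
  then obtain p where p: "net_cluster_point pointwise_weak_topology F (\<lambda>e. blinfun_apply (\<phi> e)) p"
    using weakly_compact_orbits_net_cluster_point[of "\<lambda>e. blinfun_apply (\<phi> e)" F K] assms(3)
      \<open>F \<noteq> bot\<close> bounded by blast
  have fixes_generators: "p (\<phi> a x) = \<phi> a x" for a x
  proof (rule net_cluster_point_fixes[OF p])
    have "((\<lambda>e. \<phi> (e * a) x) \<longlongrightarrow> \<phi> a x) F"
      by (rule bounded_linear.tendsto[OF orbit left_unit])
    then show "((\<lambda>e. \<phi> e (\<phi> a x)) \<longlongrightarrow> \<phi> a x) F"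
      by (simp add: mult)
  qed
  have "norm (\<phi> e x) \<le> norm x * (K * B)" if "norm e \<le> K" for e x
  proof -
    have "norm (\<phi> e x) \<le> norm (\<phi> e) * norm x"
      by (rule norm_blinfun)
    also have "\<dots> \<le> (K * B) * norm x"
      using B[of e] mult_right_mono[OF that \<open>B \<ge> 0\<close>] by (intro mult_right_mono) simp_all
    finally show ?thesis
      by (simp add: mult.commute)
  qed
  then have "norm (p x) \<le> norm x * (K * B)" for x
    using bounded by (intro norm_net_cluster_point_le[OF p]) (rule eventually_mono)
  moreover have "linear p"
    using p linear_\<phi> by (rule linear_net_cluster_point)
  ultimately have "bounded_linear p"
    unfolding bounded_linear_def bounded_linear_axioms_def by blast
  moreover have "p x \<in> essential_space \<phi>" for x
  proof (rule net_cluster_point_in_closed_subspace[OF p])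
    show "subspace (essential_space \<phi>)" "closed (essential_space \<phi>)"
      unfolding essential_space_def by (simp_all add: subspace_closure subspace_span)
    have "\<phi> e x \<in> essential_space \<phi>" for e
      unfolding essential_space_def by (rule closure_subset[THEN subsetD], rule span_base) blast
    then show "\<forall>\<^sub>F e in F. \<phi> e x \<in> essential_space \<phi>"
      by simp
  qed
  moreover have "p y = y" if y: "y \<in> essential_space \<phi>" for y
  proof (rule bounded_linear_fixes_closure_span[OF \<open>bounded_linear p\<close>])
    show "p z = z" if "z \<in> {\<phi> a x | a x. True}" for z
      using that fixes_generators by blast
    show "y \<in> closure (span {\<phi> a x | a x. True})"
      using y unfolding essential_space_def .
  qed
  ultimately show ?thesis
    by (rule complementedI)
qed

end
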